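(* Let $\mathcal{K}\subset L^2(G)$ be a reproducing kernel Hilbert space satisfying (LOC) and (WUC) for some admissible weight $w$. For every $\varepsilon\in(0,1)$ there exists a compact unit neighborhood $U\subset G$ such that: if $\Lambda$ is relatively separated and $U$-dense in $G$ and $(U_\lambda)_{\lambda\in\Lambda}$ is a disjoint cover associated to $\Lambda$ and $U$, then $(\mu_G(U_\lambda)^{1/2}k_\lambda)_{\lambda\in\Lambda}$ is a frame for $\mathcal{K}$ with lower frame bound $1-\varepsilon$ and upper frame bound $1+\varepsilon$.
   Context: $G$ is a $\sigma$-compact locally compact group with left Haar measure $\mu_G$; $Q$ a fixed symmetric open relatively compact neighborhood of $e$. $M_Qf(x)=\operatorname{ess\,sup}_{y\in xQ}|f(y)|$, $M_Q^Rf(x)=\operatorname{ess\,sup}_{y\in Qx}|f(y)|$. Admissible weight: measurable submultiplicative $w:G\to[1,\infty)$. $\mathcal{W}_w(G)=\{f\in C(G): w\cdot M_Q^RM_Qf\in L^1(G)\}$. RKHS $\mathcal{K}\subset L^2(G)$: closed separable subspace with bounded point evaluations, $f(x)=\langle f,k_x\rangle$, $k(x,y)=\langle k_y,k_x\rangle$. (LOC): $|k(x,y)|\le\Theta(y^{-1}x)$ for a non-negative $\Theta\in\mathcal{W}_w(G)$. (WUC): there are non-negative $\Theta'\in\mathcal{W}_w(G)$ and $\eta:G\to[0,\infty)$ with $\eta(x)\to0$ as $x\to e$ such that $\big||f(x)|^2-|f(y)|^2\big|\le\eta(y^{-1}x)\int_G|f(z)|^2\Theta'(z^{-1}y)\,d\mu_G(z)$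 for all $f\in\mathcal{K}$, $x,y$. $\Lambda$ (family, repetitions allowed) is relatively separated if $\sup_x\#(\Lambda\cap xQ)<\infty$, $U$-dense if $G=\bigcup_\lambda\lambda U$; a disjoint cover associated to $\Lambda,U$ is a family of Borel sets $U_\lambda\subset\lambda U$ whose disjoint union is $G$. Frame bounds $A,B$: $A\|f\|^2\le\sum|\langle f,g_\lambda\rangle|^2\le B\|f\|^2$. *)

theory Defs
  imports "HOL-Analysis.Analysis" "HOL-Probability.Probability"
begin

text \<open>Convention: the group G is a type of class topological_group_add; the group
 law x y is written x + y, the inverse y^(-1) is written - y, the identity e is 0.
 The class group_add is NOT assumed commutative.\<close>

definition sigma_compact_group :: "'g::{topological_group_add,t2_space} itself \<Rightarrow> bool" where
  "sigma_compact_group _ \<longleftrightarrow>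
     locally_compact_space (euclidean :: 'g topology) \<and>
     (\<exists>C :: nat \<Rightarrow> 'g set. (\<forall>n. compact (C n)) \<and> (\<Union>n. C n) = UNIV)"

definition left_haar :: "('g::{topological_group_add,t2_space}) measure \<Rightarrow> bool" where
  "left_haar M \<longleftrightarrow>
     sets M = sets borel \<and>
     (\<forall>x. \<forall>A\<in>sets borel. emeasure M ((\<lambda>y. x + y) ` A) = emeasure M A) \<and>
     (\<forall>K. compact K \<longrightarrow> emeasure M K < \<infinity>) \<and>
     (\<forall>U. open U \<and> U \<noteq> {} \<longrightarrow> emeasure M U > 0) \<and>
     (\<forall>A\<in>sets borel. emeasure M A = (INF U\<in>{U. open U \<and> A \<subseteq> U}. emeasure M U)) \<and>
     (\<forall>U. open U \<longrightarrow> emeasure M U = (SUP K\<in>{K. compact K \<and> K \<subseteq> U}. emeasure M K))"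

definition std_nbhd :: "('g::{topological_group_add,t2_space}) set \<Rightarrow> bool" where
  "std_nbhd Q \<longleftrightarrow> open Q \<and> 0 \<in> Q \<and> uminus ` Q = Q \<and> compact (closure Q)"

definition esssup_on :: "'g measure \<Rightarrow> 'g set \<Rightarrow> ('g \<Rightarrow> ereal) \<Rightarrow> ereal" where
  "esssup_on M A g = Inf {c. AE y in M. y \<in> A \<longrightarrow> g y \<le> c}"

definition loc_max :: "'g measure \<Rightarrow> ('g::group_add) set \<Rightarrow> ('g \<Rightarrow> real) \<Rightarrow> 'g \<Rightarrow> ereal" where
  "loc_max M Q f x = esssup_on M ((\<lambda>q. x + q) ` Q) (\<lambda>y. ereal \<bar>f y\<bar>)"

definition loc_max_R :: "'g measure \<Rightarrow> ('g::group_add) set \<Rightarrow> ('g \<Rightarrow> ereal) \<Rightarrow> 'g \<Rightarrow> ereal" where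
  "loc_max_R M Q g x = esssup_on M ((\<lambda>q. q + x) ` Q) (\<lambda>y. \<bar>g y\<bar>)"

definition admissible_weight :: "('g::{topological_group_add,t2_space}) measure \<Rightarrow> ('g \<Rightarrow> real) \<Rightarrow> bool" where
  "admissible_weight M w \<longleftrightarrow> w \<in> borel_measurable M \<and> (\<forall>x. 1 \<le> w x) \<and>
     (\<forall>x y. w (x + y) \<le> w x * w y)"

definition wiener :: "('g::{topological_group_add,t2_space}) measure \<Rightarrow> 'g set \<Rightarrow> ('g \<Rightarrow> real) \<Rightarrow> ('g \<Rightarrow> real) set" where
  "wiener M Q w = {f. continuous_on UNIV f \<and>
     (\<lambda>x. ereal (w x) * loc_max_R M Q (loc_max M Q f) x) \<in> borel_measurable M \<and>
     (\<integral>\<^sup>+ x. e2ennreal (ereal (w x) * loc_max_R M Q (loc_max M Q f) x) \<partial>M) < \<infinity>}"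

definition L2_inner :: "'g measure \<Rightarrow> ('g \<Rightarrow> complex) \<Rightarrow> ('g \<Rightarrow> complex) \<Rightarrow> complex" where
  "L2_inner M f g = (\<integral> z. f z * cnj (g z) \<partial>M)"

definition L2_normsq :: "'g measure \<Rightarrow> ('g \<Rightarrow> complex) \<Rightarrow> real" where
  "L2_normsq M f = (\<integral> z. (cmod (f z))\<^sup>2 \<partial>M)"

definition square_integrable :: "'g measure \<Rightarrow> ('g \<Rightarrow> complex) \<Rightarrow> bool" where
  "square_integrable M f \<longleftrightarrow> f \<in> borel_measurable M \<and> integrable M (\<lambda>z. (cmod (f z))\<^sup>2)"

text \<open>RKHS: a closed separable linear subspace K of L^2(M) (elements are genuine functions,
 the pointwise representatives) with reproducing kernel functions kf x = k_x in K,
 f x = <f, k_x> for all f in K.\<close>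
definition rkhs :: "'g measure \<Rightarrow> ('g \<Rightarrow> complex) set \<Rightarrow> ('g \<Rightarrow> 'g \<Rightarrow> complex) \<Rightarrow> bool" where
  "rkhs M K kf \<longleftrightarrow>
     (\<forall>f\<in>K. square_integrable M f) \<and>
     (\<lambda>_. 0) \<in> K \<and>
     (\<forall>f\<in>K. \<forall>g\<in>K. (\<lambda>z. f z + g z) \<in> K) \<and>
     (\<forall>f\<in>K. \<forall>c. (\<lambda>z. c * f z) \<in> K) \<and>
     (\<forall>fs g. (\<forall>n. fs n \<in> K) \<and> square_integrable M g \<and>
         (\<lambda>n. L2_normsq M (\<lambda>z. fs n z - g z)) \<longlonglongrightarrow> 0
        \<longrightarrow> (\<exists>h\<in>K. AE z in M. h z = g z)) \<and>
     (\<exists>D\<subseteq>K. countable D \<and> (\<forall>f\<in>K. \<forall>e>0. \<exists>d\<in>D. L2_normsq M (\<lambda>z. f z - d z) < e)) \<and>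
     (\<forall>x. kf x \<in> K) \<and>
     (\<forall>f\<in>K. \<forall>x. f x = L2_inner M f (kf x))"

definition rk :: "'g measure \<Rightarrow> ('g \<Rightarrow> 'g \<Rightarrow> complex) \<Rightarrow> 'g \<Rightarrow> 'g \<Rightarrow> complex" where
  "rk M kf x y = L2_inner M (kf y) (kf x)"

definition LOC :: "('g::{topological_group_add,t2_space}) measure \<Rightarrow> 'g set \<Rightarrow> ('g \<Rightarrow> real) \<Rightarrow> ('g \<Rightarrow> 'g \<Rightarrow> complex) \<Rightarrow> bool" where
  "LOC M Q w kf \<longleftrightarrow> (\<exists>\<Theta>\<in>wiener M Q w. (\<forall>x. 0 \<le> \<Theta> x) \<and>
     (\<forall>x y. cmod (rk M kf x y) \<le> \<Theta> (- y + x)))"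

definition WUC :: "('g::{topological_group_add,t2_space}) measure \<Rightarrow> 'g set \<Rightarrow> ('g \<Rightarrow> real) \<Rightarrow> ('g \<Rightarrow> complex) set \<Rightarrow> bool" where
  "WUC M Q w K \<longleftrightarrow> (\<exists>\<Theta>'\<in>wiener M Q w. \<exists>\<eta>::'g \<Rightarrow> real. (\<forall>x. 0 \<le> \<Theta>' x) \<and> (\<forall>x. 0 \<le> \<eta> x) \<and>
     (\<eta> \<longlongrightarrow> 0) (at 0) \<and>
     (\<forall>f\<in>K. \<forall>x y. ennreal \<bar>(cmod (f x))\<^sup>2 - (cmod (f y))\<^sup>2\<bar>
         \<le> ennreal (\<eta> (- y + x)) * (\<integral>\<^sup>+ z. ennreal ((cmod (f z))\<^sup>2 * \<Theta>' (- z + y)) \<partial>M)))"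

text \<open>Families Lambda = (lam i)_{i in I}, repetitions allowed.\<close>
definition rel_separated :: "'g set \<Rightarrow> 'i set \<Rightarrow> ('i \<Rightarrow> ('g::group_add)) \<Rightarrow> bool" where
  "rel_separated Q I lam \<longleftrightarrow> (\<exists>N::nat. \<forall>x. finite {i\<in>I. lam i \<in> (\<lambda>q. x + q) ` Q} \<and>
      card {i\<in>I. lam i \<in> (\<lambda>q. x + q) ` Q} \<le> N)"

definition U_dense :: "'g set \<Rightarrow> 'i set \<Rightarrow> ('i \<Rightarrow> ('g::group_add)) \<Rightarrow> bool" where
  "U_dense U I lam \<longleftrightarrow> (\<Union>i\<in>I. (\<lambda>u. lam i + u) ` U) = UNIV"

definition disjoint_cover :: "'g set \<Rightarrow> 'i set \<Rightarrow> ('i \<Rightarrow> ('g::{group_add,topological_space})) \<Rightarrow> ('i \<Rightarrow> 'g set) \<Rightarrow> bool" where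
  "disjoint_cover U I lam V \<longleftrightarrow> (\<forall>i\<in>I. V i \<in> sets borel \<and> V i \<subseteq> (\<lambda>u. lam i + u) ` U) \<and>
     disjoint_family_on V I \<and> (\<Union>i\<in>I. V i) = UNIV"

definition frame_bounds :: "'g measure \<Rightarrow> ('g \<Rightarrow> complex) set \<Rightarrow> 'i set \<Rightarrow> ('i \<Rightarrow> 'g \<Rightarrow> complex) \<Rightarrow> real \<Rightarrow> real \<Rightarrow> bool" where
  "frame_bounds M K I g A B \<longleftrightarrow> (\<forall>f\<in>K.
     (\<lambda>i. (cmod (L2_inner M f (g i)))\<^sup>2) summable_on I \<and>
     A * L2_normsq M f \<le> (\<Sum>\<^sub>\<infinity>i\<in>I. (cmod (L2_inner M f (g i)))\<^sup>2) \<and>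
     (\<Sum>\<^sub>\<infinity>i\<in>I. (cmod (L2_inner M f (g i)))\<^sup>2) \<le> B * L2_normsq M f)"

end

theory Submission
  imports Defs
begin

text \<open>For f in K the sum of mu(V i) |f(lam i)|^2 is a Riemann sum for
  |f|^2 = sum of the integrals of |f|^2 over the V i, so its error is at most the sum over i of the
  integrals over V i of ||f(x)|^2 - |f(lam i)|^2|. As V i lies in (lam i)U and eta <= delta on U,
  (WUC) bounds this integrand by delta times the integral of |f(z)|^2 Theta'(z^-1 lam i). For U
  inside Q, Theta'(z^-1 lam i) is dominated on V i by the envelope w M_Q^R M_Q Theta' at z^-1 x,
  so by left invariance the sum of mu(V i) Theta'(z^-1 lam i) is at most the integral C of the
  envelope. Hence the error is at most delta C |f|^2, and delta = epsilon/(C + 1) gives the frame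
  bounds.\<close>

lemma Hausdorff_space_euclidean_t2: "Hausdorff_space (euclidean :: 'a::t2_space topology)"
  unfolding Hausdorff_space_def disjnt_def by (metis open_openin separation_t2)

lemma compact_nbhd_subset_open:
  fixes W :: "'a::t2_space set"
  assumes "locally_compact_space (euclidean :: 'a topology)" "open W" "a \<in> W"
  obtains U where "compact U" "a \<in> interior U" "U \<subseteq> W"
proof -
  have "neighbourhood_base_of (compactin euclidean) (euclidean :: 'a topology)"
    using assms(1) locally_compact_space_neighbourhood_base Hausdorff_space_euclidean_t2 by blast
  then obtain N U where "open N" "compact U" "a \<in> N" "N \<subseteq> U" "U \<subseteq> W"
    using assms(2,3) unfolding neighbourhood_base_of by (metis compactin_euclidean_iff open_openin)
  then show thesis using that interior_maximal by blast
qed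

lemma compact_nbhd_where_small:
  fixes \<eta> :: "'a::t2_space \<Rightarrow> real"
  assumes "locally_compact_space (euclidean :: 'a topology)" and \<eta>: "(\<eta> \<longlongrightarrow> 0) (at a)"
    and "0 < \<delta>" "open Q" "a \<in> Q"
  obtains U where "compact U" "a \<in> interior U" "U \<subseteq> Q" "\<And>u. u \<in> U \<Longrightarrow> u \<noteq> a \<Longrightarrow> \<eta> u \<le> \<delta>"
proof -
  obtain S where S: "open S" "a \<in> S" "\<And>x. x \<in> S \<Longrightarrow> x \<noteq> a \<Longrightarrow> \<eta> x < \<delta>"
    using order_tendstoD(2)[OF \<eta> \<open>0 < \<delta>\<close>] unfolding eventually_at_topological by blast
  obtain U where U: "compact U" "a \<in> interior U" "U \<subseteq> S \<inter> Q"
    using compact_nbhd_subset_open[of "S \<inter> Q" a] assms(1,4,5) S(1,2) by blast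
  have "\<eta> u \<le> \<delta>" if "u \<in> U" "u \<noteq> a" for u
    using S(3)[of u] that U(3) by auto
  with U show thesis by (intro that) auto
qed

lemma open_left_translation:
  fixes A :: "'a::topological_group_add set"
  assumes "open A"
  shows "open ((\<lambda>q. x + q) ` A)"
proof -
  have "(\<lambda>q. x + q) ` A = (\<lambda>y. - x + y) -` A"
    by (auto simp: image_iff add.assoc[symmetric] intro!: bexI[of _ "- x + _"])
  moreover have "continuous_on UNIV (\<lambda>y. - x + y)" by (intro continuous_intros)
  ultimately show ?thesis using assms by (simp add: open_vimage)
qed

lemma open_right_translation:
  fixes A :: "'a::topological_group_add set"
  assumes "open A"
  shows "open ((\<lambda>q. q + x) ` A)"
proof -
  have "(\<lambda>q. q + x) ` A = (\<lambda>y. y + - x) -` A"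
    by (auto simp: image_iff add.assoc intro!: bexI[of _ "_ + - x"])
  moreover have "continuous_on UNIV (\<lambda>y. y + - x)" by (intro continuous_intros)
  ultimately show ?thesis using assms by (simp add: open_vimage)
qed

lemma left_haar_sets: "left_haar M \<Longrightarrow> sets M = sets borel"
  unfolding left_haar_def by (elim conjE)

lemma left_haar_space:
  assumes "left_haar M"
  shows "space M = UNIV"
  using sets_eq_imp_space_eq[OF left_haar_sets[OF assms]] by simp

lemma left_haar_open_pos: "left_haar M \<Longrightarrow> open U \<Longrightarrow> U \<noteq> {} \<Longrightarrow> 0 < emeasure M U"
  unfolding left_haar_def by (elim conjE) fast

lemma left_haar_compact_finite: "left_haar M \<Longrightarrow> compact C \<Longrightarrow> emeasure M C < \<infinity>"
  unfolding left_haar_def by (elim conjE) fast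

lemma left_haar_translate:
  "left_haar M \<Longrightarrow> A \<in> sets borel \<Longrightarrow> emeasure M ((\<lambda>y. x + y) ` A) = emeasure M A"
  unfolding left_haar_def by (elim conjE) fast

lemma measurable_left_translate:
  fixes z :: "'g::{topological_group_add,t2_space}"
  assumes "left_haar M"
  shows "(\<lambda>x. z + x) \<in> measurable M M"
proof -
  have "(\<lambda>x. z + x) \<in> measurable borel borel"
    by (intro borel_measurable_continuous_onI continuous_intros)
  moreover have sM: "sets M = sets borel" by (rule left_haar_sets[OF assms])
  ultimately show ?thesis using measurable_cong_sets[OF sM sM] by simp
qed

lemma distr_left_translate:
  fixes z :: "'g::{topological_group_add,t2_space}"
  assumes haar: "left_haar M"
  shows "distr M M (\<lambda>x. z + x) = M"
proof (rule measure_eqI)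
  fix A assume "A \<in> sets (distr M M (\<lambda>x. z + x))"
  then have A: "A \<in> sets M" "A \<in> sets borel" using left_haar_sets[OF haar] by simp_all
  have "x \<in> (\<lambda>y. - z + y) ` A \<longleftrightarrow> z + x \<in> A" for x
    by (auto intro: image_eqI[of x _ "z + x"])
  then have "(\<lambda>x. z + x) -` A \<inter> space M = (\<lambda>y. - z + y) ` A"
    using left_haar_space[OF haar] by blast
  then show "emeasure (distr M M (\<lambda>x. z + x)) A = emeasure M A"
    using emeasure_distr[OF measurable_left_translate[OF haar] A(1)] left_haar_translate[OF haar A(2)]
    by simp
qed simp

lemma nn_integral_left_translate:
  fixes M :: "('g::{topological_group_add,t2_space}) measure"
  assumes haar: "left_haar M" and g: "g \<in> borel_measurable M"
  shows "(\<integral>\<^sup>+ x. g (z + x) \<partial>M) = (\<integral>\<^sup>+ x. g x \<partial>M)"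
  using nn_integral_distr[OF measurable_left_translate[OF haar], of g] g
  by (simp add: distr_left_translate[OF haar])

lemma left_haar_continuous_measurable:
  fixes f :: "'g::{topological_group_add,t2_space} \<Rightarrow> real"
  assumes haar: "left_haar M" and f: "continuous_on UNIV f"
  shows "f \<in> borel_measurable M"
proof -
  have "f \<in> borel_measurable borel" using f by (rule borel_measurable_continuous_onI)
  moreover have sM: "sets M = sets borel" by (rule left_haar_sets[OF haar])
  ultimately show ?thesis using measurable_cong_sets[OF sM refl] by simp
qed

lemma esssup_on_ge_open:
  fixes g :: "'g::{topological_group_add,t2_space} \<Rightarrow> ereal"
  assumes haar: "left_haar M" and W: "open W" "x \<in> W" "W \<subseteq> A"
    and gt: "\<And>y. y \<in> W \<Longrightarrow> r < g y"
  shows "r \<le> esssup_on M A g"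
  unfolding esssup_on_def
proof (rule Inf_greatest)
  fix c assume "c \<in> {c. AE y in M. y \<in> A \<longrightarrow> g y \<le> c}"
  then have ae: "AE y in M. y \<in> A \<longrightarrow> g y \<le> c" by simp
  show "r \<le> c"
  proof (rule ccontr)
    assume "\<not> r \<le> c"
    obtain N where N: "{y\<in>space M. \<not> (y \<in> A \<longrightarrow> g y \<le> c)} \<subseteq> N" "emeasure M N = 0" "N \<in> sets M"
      by (rule AE_E[OF ae])
    have "W \<subseteq> N"
    proof
      fix y assume y: "y \<in> W"
      then have "c < g y" using gt \<open>\<not> r \<le> c\<close> by (meson less_trans not_le)
      then show "y \<in> N" using N(1) W(3) y left_haar_space[OF haar] by (auto simp: not_le)
    qed
    then have "emeasure M W \<le> emeasure M N" by (rule emeasure_mono) (fact N(3))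
    with left_haar_open_pos[OF haar W(1)] W(2) N(2) show False by auto
  qed
qed

lemma abs_le_loc_max:
  fixes f :: "'g::{topological_group_add,t2_space} \<Rightarrow> real"
  assumes haar: "left_haar M" and "open Q" and cont: "continuous_on UNIV f"
    and c: "c \<in> (\<lambda>q. b + q) ` Q"
  shows "ereal \<bar>f c\<bar> \<le> loc_max M Q f b"
  unfolding loc_max_def
proof (rule dense_le)
  fix r assume r: "r < ereal \<bar>f c\<bar>"
  have "continuous_on UNIV (\<lambda>y. ereal \<bar>f y\<bar>)"
    by (intro continuous_on_ereal continuous_intros cont)
  then have "open ((\<lambda>q. b + q) ` Q \<inter> {y. r < ereal \<bar>f y\<bar>})"
    by (intro open_Int open_left_translation \<open>open Q\<close> open_Collect_less continuous_on_const)
  then show "r \<le> esssup_on M ((\<lambda>q. b + q) ` Q) (\<lambda>y. ereal \<bar>f y\<bar>)"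
    by (rule esssup_on_ge_open[OF haar _ IntI[OF c]]) (use r in auto)
qed

text \<open>The point a - u lies in yQ for every y in (a - u)Q, by symmetry of Q, and a itself lies
  in Qa and in (a - u)Q; so the inner maximal function exceeds |f (a - u)| on an open
  neighbourhood of a.\<close>
lemma abs_le_loc_max_R_loc_max:
  fixes f :: "'g::{topological_group_add,t2_space} \<Rightarrow> real"
  assumes haar: "left_haar M" and Q: "std_nbhd Q" and cont: "continuous_on UNIV f" and u: "u \<in> Q"
  shows "ereal \<bar>f (a + - u)\<bar> \<le> loc_max_R M Q (loc_max M Q f) a"
  unfolding loc_max_R_def
proof (rule dense_le)
  fix r assume r: "r < ereal \<bar>f (a + - u)\<bar>"
  have oQ: "open Q" "0 \<in> Q" "uminus ` Q = Q" using Q unfolding std_nbhd_def by auto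
  let ?W = "(\<lambda>q. q + a) ` Q \<inter> (\<lambda>q. (a + - u) + q) ` Q"
  have "a \<in> (\<lambda>q. q + a) ` Q" using oQ(2) by (auto intro: image_eqI[of _ _ 0])
  moreover have "a \<in> (\<lambda>q. (a + - u) + q) ` Q" using u by (auto simp: add.assoc intro: image_eqI[of _ _ u])
  ultimately have "a \<in> ?W" by blast
  moreover have "r < \<bar>loc_max M Q f y\<bar>" if "y \<in> ?W" for y
  proof -
    from that obtain q where q: "q \<in> Q" "y = (a + - u) + q" by auto
    have "- q \<in> Q" using oQ(3) q(1) by force
    then have "a + - u \<in> (\<lambda>q. y + q) ` Q" using q(2) by (auto simp: add.assoc intro: image_eqI[of _ _ "- q"])
    then have "ereal \<bar>f (a + - u)\<bar> \<le> loc_max M Q f y" by (rule abs_le_loc_max[OF haar oQ(1) cont])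
    also have "\<dots> \<le> \<bar>loc_max M Q f y\<bar>" by (cases "loc_max M Q f y") auto
    finally show ?thesis using r by simp
  qed
  moreover have "open ?W"
    using open_Int[OF open_right_translation open_left_translation] oQ(1) by blast
  ultimately show "r \<le> esssup_on M ((\<lambda>q. q + a) ` Q) (\<lambda>y. \<bar>loc_max M Q f y\<bar>)"
    by (intro esssup_on_ge_open[OF haar _ _ Int_lower1])
qed

definition wiener_envelope :: "'g measure \<Rightarrow> ('g::group_add) set \<Rightarrow> ('g \<Rightarrow> real) \<Rightarrow> ('g \<Rightarrow> real) \<Rightarrow> 'g \<Rightarrow> ennreal" where
  "wiener_envelope M Q w f x = e2ennreal (ereal (w x) * loc_max_R M Q (loc_max M Q f) x)"

lemma wiener_envelope_measurable:
  "f \<in> wiener M Q w \<Longrightarrow> wiener_envelope M Q w f \<in> borel_measurable M"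
  unfolding wiener_def wiener_envelope_def
  using measurable_compose[OF _ measurable_e2ennreal] by (auto simp: comp_def)

lemma nn_integral_wiener_envelope_finite:
  "f \<in> wiener M Q w \<Longrightarrow> (\<integral>\<^sup>+ x. wiener_envelope M Q w f x \<partial>M) < \<infinity>"
  unfolding wiener_def wiener_envelope_def by simp

lemma abs_le_wiener_envelope:
  fixes f :: "'g::{topological_group_add,t2_space} \<Rightarrow> real"
  assumes haar: "left_haar M" and Q: "std_nbhd Q" and cont: "continuous_on UNIV f"
    and w: "\<And>x. 1 \<le> w x" and u: "u \<in> Q"
  shows "ennreal \<bar>f (a + - u)\<bar> \<le> wiener_envelope M Q w f a"
proof -
  let ?h = "loc_max_R M Q (loc_max M Q f) a"
  have h: "ereal \<bar>f (a + - u)\<bar> \<le> ?h" by (rule abs_le_loc_max_R_loc_max[OF haar Q cont u])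
  have "ereal \<bar>f (a + - u)\<bar> \<le> ereal (w a) * ?h"
  proof (cases ?h)
    case (real t)
    then have "1 * t \<le> w a * t" using h w[of a] by (intro mult_right_mono) auto
    then show ?thesis using h real by simp
  qed (use h w[of a] in auto)
  then show ?thesis
    unfolding wiener_envelope_def using e2ennreal_mono by (fastforce simp: e2ennreal_ereal)
qed

lemma nn_integral_split_disjoint:
  assumes disj: "disjoint_family V" and V: "\<And>n. V n \<in> sets M" "(\<Union>n. V n) = space M"
    and g: "g \<in> borel_measurable M"
  shows "(\<Sum>n. \<integral>\<^sup>+ x \<in> V n. g x \<partial>M) = (\<integral>\<^sup>+ x. g x \<partial>M)"
proof -
  have "(\<Sum>n. \<integral>\<^sup>+ x \<in> V n. g x \<partial>M) = (\<integral>\<^sup>+ x. (\<Sum>n. g x * indicator (V n) x) \<partial>M)"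
    using g V(1) by (intro nn_integral_suminf[symmetric] borel_measurable_times_ennreal borel_measurable_indicator)
  also have "\<dots> = (\<integral>\<^sup>+ x. g x \<partial>M)"
    using V(2) by (intro nn_integral_cong) (simp add: suminf_indicator[OF disj])
  finally show ?thesis .
qed

lemma suminf_emeasure_le_nn_integral:
  assumes disj: "disjoint_family V" and V: "\<And>n. V n \<in> sets M" "(\<Union>n. V n) = space M"
    and g: "g \<in> borel_measurable M" and le: "\<And>n x. x \<in> V n \<Longrightarrow> t n \<le> g x"
  shows "(\<Sum>n. t n * emeasure M (V n)) \<le> (\<integral>\<^sup>+ x. g x \<partial>M)"
proof -
  have "t n * emeasure M (V n) \<le> (\<integral>\<^sup>+ x \<in> V n. g x \<partial>M)" for n
    unfolding nn_integral_cmult_indicator[OF V(1), symmetric]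
    by (intro nn_integral_mono) (simp add: le split: split_indicator)
  then have "(\<Sum>n. t n * emeasure M (V n)) \<le> (\<Sum>n. \<integral>\<^sup>+ x \<in> V n. g x \<partial>M)"
    by (intro suminf_le summableI)
  then show ?thesis unfolding nn_integral_split_disjoint[OF disj V g] .
qed

lemma suminf_set_nn_integral_le_add:
  assumes h: "\<And>n. h n \<in> borel_measurable M" and k: "\<And>n. k n \<in> borel_measurable M"
    and V: "\<And>n. V n \<in> sets M" and le: "\<And>n x. x \<in> V n \<Longrightarrow> g n x \<le> h n x + k n x"
  shows "(\<Sum>n. \<integral>\<^sup>+ x \<in> V n. g n x \<partial>M)
    \<le> (\<Sum>n. \<integral>\<^sup>+ x \<in> V n. h n x \<partial>M) + (\<Sum>n. \<integral>\<^sup>+ x \<in> V n. k n x \<partial>M)"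
proof -
  have "(\<integral>\<^sup>+ x \<in> V n. g n x \<partial>M)
      \<le> (\<integral>\<^sup>+ x. h n x * indicator (V n) x + k n x * indicator (V n) x \<partial>M)" for n
    by (intro nn_integral_mono) (simp add: le split: split_indicator)
  also have "\<dots> n = (\<integral>\<^sup>+ x \<in> V n. h n x \<partial>M) + (\<integral>\<^sup>+ x \<in> V n. k n x \<partial>M)" for n
    using h k V by (intro nn_integral_add borel_measurable_times_ennreal borel_measurable_indicator)
  finally show ?thesis
    by (subst suminf_add) (auto intro: suminf_le summableI)
qed

lemma ennreal_le_plus_abs_diff: "0 \<le> b \<Longrightarrow> ennreal a \<le> ennreal b + ennreal \<bar>b - a\<bar>"
  by (simp add: ennreal_plus[symmetric] del: ennreal_plus)

lemma obtain_pos_mult_le_ennreal: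
  assumes "c < \<infinity>" "0 < \<epsilon>"
  obtains \<delta> :: real where "0 < \<delta>" "ennreal \<delta> * c \<le> ennreal \<epsilon>"
proof -
  obtain C where C: "c = ennreal C" "0 \<le> C" using assms(1) by (cases c) auto
  have "0 < \<epsilon> / (C + 1)" "\<epsilon> / (C + 1) * C \<le> \<epsilon>"
    using assms(2) C(2) by (auto simp: field_simps)
  then show thesis using that C by (simp add: ennreal_mult[symmetric] ennreal_leI)
qed

lemma sample_sum_approx_integral:
  fixes F :: "'a \<Rightarrow> real" and a :: "nat \<Rightarrow> real"
  assumes disj: "disjoint_family V" and V: "\<And>n. V n \<in> sets M" "(\<Union>n. V n) = space M"
    and fin: "\<And>n. emeasure M (V n) < \<infinity>"
    and F: "integrable M F" "\<And>x. 0 \<le> F x" and a: "\<And>n. 0 \<le> a n" and "0 \<le> e"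
    and osc: "(\<Sum>n. \<integral>\<^sup>+ x \<in> V n. ennreal \<bar>F x - a n\<bar> \<partial>M) \<le> ennreal e"
  shows "summable (\<lambda>n. a n * measure M (V n))"
    and "\<bar>(\<Sum>n. a n * measure M (V n)) - integral\<^sup>L M F\<bar> \<le> e"
proof -
  let ?s = "\<lambda>n. a n * measure M (V n)" and ?N = "integral\<^sup>L M F"
  let ?D = "\<Sum>n. \<integral>\<^sup>+ x \<in> V n. ennreal \<bar>F x - a n\<bar> \<partial>M"
  have Fm: "F \<in> borel_measurable M" using F(1) by blast
  have osc_m: "(\<lambda>x. ennreal \<bar>F x - a n\<bar>) \<in> borel_measurable M" for n
    using Fm by measurable
  have s0: "0 \<le> ?s n" for n using a by simp
  have N0: "0 \<le> ?N" using F(2) by simp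
  have s: "ennreal (?s n) = (\<integral>\<^sup>+ x \<in> V n. ennreal (a n) \<partial>M)" for n
  proof -
    have "emeasure M (V n) = ennreal (measure M (V n))"
      using fin[of n] by (intro emeasure_eq_ennreal_measure) simp
    then show ?thesis using a[of n] by (simp add: nn_integral_cmult_indicator[OF V(1)] ennreal_mult)
  qed
  have N: "ennreal ?N = (\<Sum>n. \<integral>\<^sup>+ x \<in> V n. ennreal (F x) \<partial>M)"
    using nn_integral_eq_integral[OF F(1)] F(2) nn_integral_split_disjoint[OF disj V] Fm by simp
  have "(\<Sum>n. ennreal (?s n)) \<le> ennreal ?N + ?D"
    unfolding s N using F(2) Fm V(1) osc_m
    by (intro suminf_set_nn_integral_le_add ennreal_le_plus_abs_diff) auto
  also have "\<dots> \<le> ennreal (?N + e)" using osc N0 \<open>0 \<le> e\<close> by (simp add: ennreal_plus add_left_mono)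
  finally have up: "(\<Sum>n. ennreal (?s n)) \<le> ennreal (?N + e)" .
  have "ennreal (F x) \<le> ennreal (a n) + ennreal \<bar>F x - a n\<bar>" for n x
    using ennreal_le_plus_abs_diff[OF a[of n], of "F x"] by (simp add: abs_minus_commute)
  then have "ennreal ?N \<le> (\<Sum>n. ennreal (?s n)) + ?D"
    unfolding s N using V(1) osc_m by (intro suminf_set_nn_integral_le_add) auto
  also have "\<dots> \<le> (\<Sum>n. ennreal (?s n)) + ennreal e" using osc by (rule add_left_mono)
  finally have lo: "ennreal ?N \<le> (\<Sum>n. ennreal (?s n)) + ennreal e" .
  have sum_fin: "(\<Sum>n. ennreal (?s n)) \<noteq> \<top>" using up by (auto simp: top_unique)
  show sm: "summable ?s" by (rule summable_suminf_not_top[OF s0 sum_fin])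
  have "(\<Sum>n. ennreal (?s n)) = ennreal (suminf ?s)" by (rule suminf_ennreal2[OF s0 sm])
  moreover have "0 \<le> suminf ?s" using sm s0 by (rule suminf_nonneg)
  ultimately show "\<bar>suminf ?s - ?N\<bar> \<le> e"
    using up lo N0 \<open>0 \<le> e\<close> by (simp add: ennreal_plus[symmetric] abs_le_iff del: ennreal_plus)
qed

lemma suminf_kernel_le_wiener_envelope:
  fixes M :: "('g::{topological_group_add,t2_space}) measure"
  assumes haar: "left_haar M" and Q: "std_nbhd Q" and \<Theta>: "\<Theta> \<in> wiener M Q w" "\<And>x. 0 \<le> \<Theta> x"
    and w: "\<And>x. 1 \<le> w x" and UQ: "U \<subseteq> Q"
    and disj: "disjoint_family V" and V: "\<And>n. V n \<in> sets M" "(\<Union>n. V n) = UNIV"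
    and Vlam: "\<And>n. V n \<subseteq> (\<lambda>u. lam n + u) ` U"
  shows "(\<Sum>n. ennreal (\<Theta> (- z + lam n)) * emeasure M (V n)) \<le> (\<integral>\<^sup>+ x. wiener_envelope M Q w \<Theta> x \<partial>M)"
proof -
  let ?E = "wiener_envelope M Q w \<Theta>"
  have Em: "?E \<in> borel_measurable M" by (rule wiener_envelope_measurable[OF \<Theta>(1)])
  have \<Theta>c: "continuous_on UNIV \<Theta>" using \<Theta>(1) unfolding wiener_def by blast
  have "ennreal (\<Theta> (- z + lam n)) \<le> ?E (- z + x)" if x: "x \<in> V n" for n x
  proof -
    obtain u where u: "u \<in> U" "x = lam n + u" using x Vlam by blast
    then have "- z + lam n = (- z + x) + - u" by (simp add: add.assoc[symmetric])
    then show ?thesis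
      using abs_le_wiener_envelope[OF haar Q \<Theta>c w, of u "- z + x"] u(1) UQ \<Theta>(2) by auto
  qed
  then have "(\<Sum>n. ennreal (\<Theta> (- z + lam n)) * emeasure M (V n)) \<le> (\<integral>\<^sup>+ x. ?E (- z + x) \<partial>M)"
    using V(2) left_haar_space[OF haar] measurable_compose[OF measurable_left_translate[OF haar] Em]
    by (intro suminf_emeasure_le_nn_integral[OF disj V(1)]) auto
  also have "\<dots> = (\<integral>\<^sup>+ x. ?E x \<partial>M)" by (rule nn_integral_left_translate[OF haar Em])
  finally show ?thesis .
qed

lemma suminf_oscillation_le:
  fixes M :: "('g::{topological_group_add,t2_space}) measure" and F :: "'g \<Rightarrow> real"
  assumes haar: "left_haar M" and Q: "std_nbhd Q" and \<Theta>: "\<Theta> \<in> wiener M Q w" "\<And>x. 0 \<le> \<Theta> x"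
    and w: "\<And>x. 1 \<le> w x" and UQ: "U \<subseteq> Q"
    and disj: "disjoint_family V" and V: "\<And>n. V n \<in> sets M" "(\<Union>n. V n) = UNIV"
    and Vlam: "\<And>n. V n \<subseteq> (\<lambda>u. lam n + u) ` U"
    and F: "F \<in> borel_measurable M" "\<And>x. 0 \<le> F x"
    and osc: "\<And>n x. x \<in> V n \<Longrightarrow> ennreal \<bar>F x - F (lam n)\<bar>
      \<le> ennreal \<delta> * (\<integral>\<^sup>+ y. ennreal (F y * \<Theta> (- y + lam n)) \<partial>M)"
  shows "(\<Sum>n. \<integral>\<^sup>+ x \<in> V n. ennreal \<bar>F x - F (lam n)\<bar> \<partial>M)
    \<le> ennreal \<delta> * (\<integral>\<^sup>+ x. wiener_envelope M Q w \<Theta> x \<partial>M) * (\<integral>\<^sup>+ y. ennreal (F y) \<partial>M)"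
proof -
  let ?C = "\<integral>\<^sup>+ x. wiener_envelope M Q w \<Theta> x \<partial>M"
  let ?k = "\<lambda>n y. ennreal (\<Theta> (- y + lam n)) * emeasure M (V n)"
  have \<Theta>c: "continuous_on UNIV \<Theta>" using \<Theta>(1) unfolding wiener_def by blast
  have \<Theta>m: "(\<lambda>y. \<Theta> (- y + lam n)) \<in> borel_measurable M" for n
    by (intro left_haar_continuous_measurable[OF haar] continuous_on_compose2[OF \<Theta>c] continuous_intros) auto
  then have km: "?k n \<in> borel_measurable M" for n by measurable
  have Jk: "(\<integral>\<^sup>+ y. ennreal (F y * \<Theta> (- y + lam n)) \<partial>M) * emeasure M (V n)
      = (\<integral>\<^sup>+ y. ennreal (F y) * ?k n y \<partial>M)" for n
  proof -
    have "(\<lambda>y. ennreal (F y * \<Theta> (- y + lam n))) \<in> borel_measurable M" using F(1) \<Theta>m by measurable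
    then show ?thesis
      by (subst nn_integral_multc[symmetric]) (auto simp: ennreal_mult F(2) \<Theta>(2) mult.assoc)
  qed
  have "(\<integral>\<^sup>+ x \<in> V n. ennreal \<bar>F x - F (lam n)\<bar> \<partial>M)
      \<le> (\<integral>\<^sup>+ x. ennreal \<delta> * (\<integral>\<^sup>+ y. ennreal (F y * \<Theta> (- y + lam n)) \<partial>M) * indicator (V n) x \<partial>M)" for n
    by (intro nn_integral_mono) (simp add: osc split: split_indicator)
  also have "\<dots> n = ennreal \<delta> * (\<integral>\<^sup>+ y. ennreal (F y) * ?k n y \<partial>M)" for n
    by (subst nn_integral_cmult_indicator[OF V(1)]) (simp only: mult.assoc Jk)
  finally have "(\<Sum>n. \<integral>\<^sup>+ x \<in> V n. ennreal \<bar>F x - F (lam n)\<bar> \<partial>M)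
      \<le> ennreal \<delta> * (\<Sum>n. \<integral>\<^sup>+ y. ennreal (F y) * ?k n y \<partial>M)"
    by (subst ennreal_suminf_cmult[symmetric]) (intro suminf_le summableI)
  also have "(\<Sum>n. \<integral>\<^sup>+ y. ennreal (F y) * ?k n y \<partial>M) = (\<integral>\<^sup>+ y. ennreal (F y) * (\<Sum>n. ?k n y) \<partial>M)"
    using F(1) km by (simp add: nn_integral_suminf[symmetric])
  also have "\<dots> \<le> (\<integral>\<^sup>+ y. ennreal (F y) * ?C \<partial>M)"
    by (intro nn_integral_mono mult_left_mono
        suminf_kernel_le_wiener_envelope[OF haar Q \<Theta> w UQ disj V Vlam]) simp
  also have "\<dots> = ?C * (\<integral>\<^sup>+ y. ennreal (F y) \<partial>M)" using F(1) by (simp add: nn_integral_multc mult.commute)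
  finally show ?thesis by (simp add: mult.assoc mult_left_mono)
qed

lemma disjoint_cover_padded:
  assumes "disjoint_cover U I lam V"
  defines "V' \<equiv> \<lambda>n. if n \<in> I then V n else {}"
  shows "disjoint_family V'" and "V' n \<in> sets borel" and "(\<Union>n. V' n) = UNIV"
    and "V' n \<subseteq> (\<lambda>u. lam n + u) ` U"
proof -
  have V: "\<forall>i\<in>I. V i \<in> sets borel \<and> V i \<subseteq> (\<lambda>u. lam i + u) ` U" "disjoint_family_on V I"
    "(\<Union>i\<in>I. V i) = UNIV"
    using assms(1) unfolding disjoint_cover_def by blast+
  show "disjoint_family V'"
    using V(2) unfolding V'_def disjoint_family_on_def by simp
  show "V' n \<in> sets borel" "V' n \<subseteq> (\<lambda>u. lam n + u) ` U" using V(1) unfolding V'_def by simp_all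
  have "(\<Union>n. V' n) = (\<Union>i\<in>I. V i)" unfolding V'_def by (rule set_eqI) (simp split: if_splits)
  then show "(\<Union>n. V' n) = UNIV" using V(3) by simp
qed

lemma has_sum_suminf_vanishing_outside:
  fixes s :: "nat \<Rightarrow> real"
  assumes "summable s" "\<And>n. 0 \<le> s n" "\<And>n. n \<notin> I \<Longrightarrow> s n = 0"
  shows "(s has_sum suminf s) I"
proof -
  have "(s has_sum suminf s) UNIV" using assms(1,2) by (intro sums_nonneg_imp_has_sum summable_sums)
  moreover have "(s has_sum suminf s) I \<longleftrightarrow> (s has_sum suminf s) UNIV"
    by (rule has_sum_cong_neutral) (use assms(3) in auto)
  ultimately show ?thesis by simp
qed

lemma rkhs_inner_scaled_kernel:
  assumes "rkhs M K kf" "f \<in> K"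
  shows "L2_inner M f (\<lambda>z. c * kf x z) = cnj c * f x"
proof -
  have repr: "\<forall>f\<in>K. \<forall>x. f x = L2_inner M f (kf x)" using assms(1) unfolding rkhs_def by (elim conjE)
  have "L2_inner M f (\<lambda>z. c * kf x z) = (\<integral> z. cnj c * (f z * cnj (kf x z)) \<partial>M)"
    unfolding L2_inner_def by (intro Bochner_Integration.integral_cong) (simp_all add: algebra_simps)
  also have "\<dots> = cnj c * L2_inner M f (kf x)" unfolding L2_inner_def by simp
  also have "\<dots> = cnj c * f x" using repr assms(2) by simp
  finally show ?thesis .
qed

lemma WUC_oscillation_le:
  fixes x y :: "'g::group_add"
  assumes wuc: "ennreal \<bar>(cmod (f x))\<^sup>2 - (cmod (f y))\<^sup>2\<bar>
      \<le> ennreal (\<eta> (- y + x)) * (\<integral>\<^sup>+ z. ennreal ((cmod (f z))\<^sup>2 * \<Theta> (- z + y)) \<partial>M)"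
    and \<eta>: "- y + x \<noteq> 0 \<Longrightarrow> \<eta> (- y + x) \<le> \<delta>"
  shows "ennreal \<bar>(cmod (f x))\<^sup>2 - (cmod (f y))\<^sup>2\<bar>
      \<le> ennreal \<delta> * (\<integral>\<^sup>+ z. ennreal ((cmod (f z))\<^sup>2 * \<Theta> (- z + y)) \<partial>M)"
proof (cases "- y + x = 0")
  case True
  then have "x = y" by (simp add: add_eq_0_iff)
  then show ?thesis by simp
next
  case False
  then have "ennreal (\<eta> (- y + x)) \<le> ennreal \<delta>" using \<eta> by (intro ennreal_leI)
  then have "ennreal (\<eta> (- y + x)) * (\<integral>\<^sup>+ z. ennreal ((cmod (f z))\<^sup>2 * \<Theta> (- z + y)) \<partial>M)
      \<le> ennreal \<delta> * (\<integral>\<^sup>+ z. ennreal ((cmod (f z))\<^sup>2 * \<Theta> (- z + y)) \<partial>M)"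
    by (rule mult_right_mono) simp
  with wuc show ?thesis by (rule order_trans)
qed

lemma sample_sum_approx_normsq:
  fixes M :: "('g::{topological_group_add,t2_space}) measure"
  assumes haar: "left_haar M" and Q: "std_nbhd Q" and w: "\<And>x. 1 \<le> w x" and K: "rkhs M K kf"
    and \<Theta>: "\<Theta> \<in> wiener M Q w" "\<And>x. 0 \<le> \<Theta> x"
    and wuc: "\<forall>f\<in>K. \<forall>x y. ennreal \<bar>(cmod (f x))\<^sup>2 - (cmod (f y))\<^sup>2\<bar>
      \<le> ennreal (\<eta> (- y + x)) * (\<integral>\<^sup>+ z. ennreal ((cmod (f z))\<^sup>2 * \<Theta> (- z + y)) \<partial>M)"
    and UQ: "U \<subseteq> Q" and \<eta>: "\<And>u. u \<in> U \<Longrightarrow> u \<noteq> 0 \<Longrightarrow> \<eta> u \<le> \<delta>"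
    and \<delta>: "ennreal \<delta> * (\<integral>\<^sup>+ x. wiener_envelope M Q w \<Theta> x \<partial>M) \<le> ennreal \<epsilon>" and "0 \<le> \<epsilon>"
    and disj: "disjoint_family V" and V: "\<And>n. V n \<in> sets M" "(\<Union>n. V n) = UNIV"
    and fin: "\<And>n. emeasure M (V n) < \<infinity>" and Vlam: "\<And>n. V n \<subseteq> (\<lambda>u. lam n + u) ` U"
    and f: "f \<in> K"
  shows "summable (\<lambda>n. (cmod (f (lam n)))\<^sup>2 * measure M (V n))"
    and "\<bar>(\<Sum>n. (cmod (f (lam n)))\<^sup>2 * measure M (V n)) - L2_normsq M f\<bar> \<le> \<epsilon> * L2_normsq M f"
proof -
  define F where "F z = (cmod (f z))\<^sup>2" for z
  have "square_integrable M f" using K f unfolding rkhs_def by blast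
  then have F: "integrable M F" "F \<in> borel_measurable M" "\<And>x. 0 \<le> F x"
    unfolding square_integrable_def F_def by auto
  have N: "L2_normsq M f = integral\<^sup>L M F" unfolding L2_normsq_def F_def ..
  have N0: "0 \<le> L2_normsq M f" unfolding N using F(3) by simp
  have "(\<Sum>n. \<integral>\<^sup>+ x \<in> V n. ennreal \<bar>F x - F (lam n)\<bar> \<partial>M)
      \<le> ennreal \<delta> * (\<integral>\<^sup>+ x. wiener_envelope M Q w \<Theta> x \<partial>M) * (\<integral>\<^sup>+ y. ennreal (F y) \<partial>M)"
  proof (rule suminf_oscillation_le[OF haar Q \<Theta> w UQ disj V Vlam F(2,3)])
    fix n x assume "x \<in> V n"
    then obtain u where "u \<in> U" "x = lam n + u" using Vlam by blast
    then have "- lam n + x \<noteq> 0 \<Longrightarrow> \<eta> (- lam n + x) \<le> \<delta>" using \<eta> by (simp add: add.assoc[symmetric])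
    then show "ennreal \<bar>F x - F (lam n)\<bar> \<le> ennreal \<delta> * (\<integral>\<^sup>+ y. ennreal (F y * \<Theta> (- y + lam n)) \<partial>M)"
      unfolding F_def by (rule WUC_oscillation_le[where \<eta> = \<eta>, OF wuc[rule_format, OF f, of x "lam n"]])
  qed
  also have "\<dots> \<le> ennreal \<epsilon> * ennreal (L2_normsq M f)"
    using \<delta> nn_integral_eq_integral[OF F(1)] F(3) unfolding N by (auto intro: mult_right_mono)
  also have "\<dots> = ennreal (\<epsilon> * L2_normsq M f)" by (rule ennreal_mult[symmetric, OF \<open>0 \<le> \<epsilon>\<close> N0])
  finally have osc: "(\<Sum>n. \<integral>\<^sup>+ x \<in> V n. ennreal \<bar>F x - F (lam n)\<bar> \<partial>M) \<le> ennreal (\<epsilon> * L2_normsq M f)" .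
  note approx = sample_sum_approx_integral[OF disj V(1) _ fin F(1,3) _ _ osc]
  show "summable (\<lambda>n. (cmod (f (lam n)))\<^sup>2 * measure M (V n))"
    using approx(1) V(2) left_haar_space[OF haar] N0 \<open>0 \<le> \<epsilon>\<close> unfolding F_def by simp
  show "\<bar>(\<Sum>n. (cmod (f (lam n)))\<^sup>2 * measure M (V n)) - L2_normsq M f\<bar> \<le> \<epsilon> * L2_normsq M f"
    using approx(2) V(2) left_haar_space[OF haar] N0 \<open>0 \<le> \<epsilon>\<close> unfolding F_def N by simp
qed

lemma frame_bounds_disjoint_cover:
  fixes M :: "('g::{topological_group_add,t2_space}) measure" and I :: "nat set"
  assumes haar: "left_haar M" and Q: "std_nbhd Q" and w: "\<And>x. 1 \<le> w x" and K: "rkhs M K kf"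
    and \<Theta>: "\<Theta> \<in> wiener M Q w" "\<And>x. 0 \<le> \<Theta> x"
    and wuc: "\<forall>f\<in>K. \<forall>x y. ennreal \<bar>(cmod (f x))\<^sup>2 - (cmod (f y))\<^sup>2\<bar>
      \<le> ennreal (\<eta> (- y + x)) * (\<integral>\<^sup>+ z. ennreal ((cmod (f z))\<^sup>2 * \<Theta> (- z + y)) \<partial>M)"
    and U: "compact U" "U \<subseteq> Q" "\<And>u. u \<in> U \<Longrightarrow> u \<noteq> 0 \<Longrightarrow> \<eta> u \<le> \<delta>"
    and \<delta>: "ennreal \<delta> * (\<integral>\<^sup>+ x. wiener_envelope M Q w \<Theta> x \<partial>M) \<le> ennreal \<epsilon>" and "0 \<le> \<epsilon>"
    and cover: "disjoint_cover U I lam V"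
  shows "frame_bounds M K I (\<lambda>i z. complex_of_real (sqrt (measure M (V i))) * kf (lam i) z)
    (1 - \<epsilon>) (1 + \<epsilon>)"
  unfolding frame_bounds_def
proof
  fix f assume f: "f \<in> K"
  define V' where "V' = (\<lambda>n. if n \<in> I then V n else {})"
  have V': "disjoint_family V'" "\<And>n. V' n \<in> sets M" "(\<Union>n. V' n) = UNIV"
    "\<And>n. V' n \<subseteq> (\<lambda>u. lam n + u) ` U"
    using disjoint_cover_padded[OF cover] left_haar_sets[OF haar] unfolding V'_def by simp_all
  have "emeasure M (V' n) < \<infinity>" for n
  proof -
    have "compact ((\<lambda>u. lam n + u) ` U)" by (intro compact_continuous_image continuous_intros U(1))
    then show ?thesis
      using emeasure_mono[OF V'(4)] left_haar_compact_finite[OF haar] left_haar_sets[OF haar]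
      by (metis compact_imp_closed borel_closed order.strict_trans1)
  qed
  note approx = sample_sum_approx_normsq[OF haar Q w K \<Theta> wuc U(2,3) \<delta> \<open>0 \<le> \<epsilon>\<close> V'(1-3)
      this V'(4) f]
  let ?s = "\<lambda>n. (cmod (f (lam n)))\<^sup>2 * measure M (V' n)"
  let ?c = "\<lambda>i. (cmod (L2_inner M f (\<lambda>z. complex_of_real (sqrt (measure M (V i))) * kf (lam i) z)))\<^sup>2"
  have "(?s has_sum suminf ?s) I"
    using approx(1) by (rule has_sum_suminf_vanishing_outside) (simp_all add: V'_def)
  moreover have "?s i = ?c i" if "i \<in> I" for i
    using that by (simp add: rkhs_inner_scaled_kernel[OF K f] V'_def norm_mult power_mult_distrib)
  ultimately have "(?c has_sum suminf ?s) I" by (simp cong: has_sum_cong)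
  then show "?c summable_on I \<and> (1 - \<epsilon>) * L2_normsq M f \<le> (\<Sum>\<^sub>\<infinity>i\<in>I. ?c i)
      \<and> (\<Sum>\<^sub>\<infinity>i\<in>I. ?c i) \<le> (1 + \<epsilon>) * L2_normsq M f"
    using approx(2) by (auto simp: infsumI summable_on_def abs_le_iff algebra_simps)
qed

theorem lemma5p1:
  fixes M :: "('g::{topological_group_add,t2_space}) measure"
    and Q :: "'g set" and w :: "'g \<Rightarrow> real"
    and K :: "('g \<Rightarrow> complex) set" and kf :: "'g \<Rightarrow> 'g \<Rightarrow> complex"
  assumes "sigma_compact_group TYPE('g)"
    and "left_haar M"
    and "std_nbhd Q"
    and "admissible_weight M w"
    and "rkhs M K kf"
    and "LOC M Q w kf"
    and "WUC M Q w K"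
    and "0 < \<epsilon>" and "\<epsilon> < (1::real)"
  shows "\<exists>U. compact U \<and> 0 \<in> interior U \<and>
    (\<forall>(I :: nat set) (lam :: nat \<Rightarrow> 'g) (V :: nat \<Rightarrow> 'g set).
       rel_separated Q I lam \<and> U_dense U I lam \<and> disjoint_cover U I lam V \<longrightarrow>
       frame_bounds M K I
         (\<lambda>i z. complex_of_real (sqrt (measure M (V i))) * kf (lam i) z)
         (1 - \<epsilon>) (1 + \<epsilon>))"
proof -
  obtain \<Theta> \<eta> where \<Theta>: "\<Theta> \<in> wiener M Q w" "\<forall>x. 0 \<le> \<Theta> x" and \<eta>: "(\<eta> \<longlongrightarrow> 0) (at 0)"
    and wuc: "\<forall>f\<in>K. \<forall>x y. ennreal \<bar>(cmod (f x))\<^sup>2 - (cmod (f y))\<^sup>2\<bar>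
      \<le> ennreal (\<eta> (- y + x)) * (\<integral>\<^sup>+ z. ennreal ((cmod (f z))\<^sup>2 * \<Theta> (- z + y)) \<partial>M)"
    using assms(7) unfolding WUC_def by (elim bexE exE conjE) (rule that)
  obtain \<delta> where \<delta>: "0 < \<delta>" "ennreal \<delta> * (\<integral>\<^sup>+ x. wiener_envelope M Q w \<Theta> x \<partial>M) \<le> ennreal \<epsilon>"
    using obtain_pos_mult_le_ennreal[OF nn_integral_wiener_envelope_finite[OF \<Theta>(1)] assms(8)] .
  have "locally_compact_space (euclidean :: 'g topology)"
    using assms(1) unfolding sigma_compact_group_def by blast
  moreover have "open Q" "0 \<in> Q" using assms(3) unfolding std_nbhd_def by auto
  ultimately obtain U where U: "compact U" "0 \<in> interior U" "U \<subseteq> Q" "\<And>u. u \<in> U \<Longrightarrow> u \<noteq> 0 \<Longrightarrow> \<eta> u \<le> \<delta>"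
    using compact_nbhd_where_small[OF _ \<eta> \<delta>(1)] by blast
  have w: "\<And>x. 1 \<le> w x" using assms(4) unfolding admissible_weight_def by blast
  show ?thesis
    using U(1,2) assms(8)
      frame_bounds_disjoint_cover[OF assms(2,3) w assms(5) \<Theta>(1) spec[OF \<Theta>(2)] wuc U(1,3,4) \<delta>(2)]
    by (intro exI[of _ U]) auto
qed

end
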